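(* Let $X$ be a nonempty set, $Y_1$ a nonempty subset of a linear space, and $Y=\{\mu y:\mu\ge0,\ y\in Y_1\}$. Let $f:X\times Y\to\mathbb{R}$, and define $g:X\times Y_1\times[0,\infty)\to\mathbb{R}$ by $g(x,y,\mu)=f(x,\mu y)$ and $h:X\times[0,\infty)\to\mathbb{R}$ by $h(x,\mu)=\sup_{y\in Y_1}f(x,\mu y)$. Assume: (a) for every $\mu\ge0$ there exists $y_1(\mu)\in Y_1$ such that $\inf_{x\in X}g(x,y_1(\mu),\mu)=\sup_{y\in Y_1}\inf_{x\in X}g(x,y,\mu)=\inf_{x\in X}\sup_{y\in Y_1}g(x,y,\mu)$; (b) $(x^*,\mu^* )$ is a saddle point of $h$, i.e. $h(x,\mu^* )\ge h(x^*,\mu^* )\ge h(x^*,\mu)$ for all $x\in X$, $\mu\ge0$. Let $y^*=\mu^*y_1(\mu^* )$. Then $(x^*,y^* )$ is a saddle point of $f$, i.e. $f(x,y^* )\ge f(x^*,y^* )\ge f(x^*,y)$ for all $x\in X$, $y\in Y$. *)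

theory Defs
  imports "HOL-Analysis.Analysis"
begin

definition cone_of :: "'a::real_vector set \<Rightarrow> 'a set" where
  "cone_of Y1 = {mu *\<^sub>R y | mu y. mu \<ge> 0 \<and> y \<in> Y1}"

definition gfun :: "('x \<Rightarrow> 'a::real_vector \<Rightarrow> real) \<Rightarrow> 'x \<Rightarrow> 'a \<Rightarrow> real \<Rightarrow> real" where
  "gfun f x y mu = f x (mu *\<^sub>R y)"

definition hfun :: "('x \<Rightarrow> 'a::real_vector \<Rightarrow> real) \<Rightarrow> 'a set \<Rightarrow> 'x \<Rightarrow> real \<Rightarrow> ereal" where
  "hfun f Y1 x mu = (SUP y\<in>Y1. ereal (f x (mu *\<^sub>R y)))"

end

theory Submission
  imports Defs
begin

text \<open>By (a), \<open>inf\<^sub>x f(x, y\<^sup>*) = inf\<^sub>x h(x, \<mu>\<^sup>*)\<close>, and by the left half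
  of (b) this infimum is attained at \<open>x\<^sup>*\<close>; hence \<open>h(x\<^sup>*, \<mu>\<^sup>*) \<le> f(x, y\<^sup>*)\<close> for all \<open>x\<close>.
  Every \<open>y = \<mu> z\<close> in the cone satisfies \<open>f(x\<^sup>*, y) \<le> h(x\<^sup>*, \<mu>) \<le> h(x\<^sup>*, \<mu>\<^sup>*)\<close> by the right half
  of (b), and \<open>f(x\<^sup>*, y\<^sup>*) \<le> h(x\<^sup>*, \<mu>\<^sup>*)\<close> since \<open>y\<^sub>1(\<mu>\<^sup>*) \<in> Y\<^sub>1\<close>; chaining these inequalities gives
  both halves of the saddle-point property of \<open>(x\<^sup>*, y\<^sup>*)\<close>.\<close>

lemma hfun_upper:
  assumes "z \<in> Y1"
  shows "ereal (f x (mu *\<^sub>R z)) \<le> hfun f Y1 x mu"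
  unfolding hfun_def using assms by (rule SUP_upper2) simp

lemma hfun_upper_cone:
  assumes "y \<in> cone_of Y1"
  obtains mu where "mu \<ge> 0" "ereal (f x y) \<le> hfun f Y1 x mu"
proof -
  from assms obtain mu z where "y = mu *\<^sub>R z" "mu \<ge> 0" "z \<in> Y1"
    unfolding cone_of_def by blast
  with hfun_upper[of z Y1 f x mu] show thesis by (intro that) simp_all
qed

lemma INF_eq_attained:
  fixes h :: "'x \<Rightarrow> 'b::complete_lattice"
  assumes "x0 \<in> X" and "\<And>x. x \<in> X \<Longrightarrow> h x0 \<le> h x"
  shows "(INF x\<in>X. h x) = h x0"
  using assms by (intro antisym INF_lower INF_greatest)

lemma INF_selection_eq_INF_hfun:
  assumes "(INF x\<in>X. ereal (gfun f x y mu)) = (SUP y\<in>Y1. INF x\<in>X. ereal (gfun f x y mu))"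
    and "(SUP y\<in>Y1. INF x\<in>X. ereal (gfun f x y mu)) = (INF x\<in>X. SUP y\<in>Y1. ereal (gfun f x y mu))"
  shows "(INF x\<in>X. ereal (f x (mu *\<^sub>R y))) = (INF x\<in>X. hfun f Y1 x mu)"
  using assms by (simp add: gfun_def hfun_def)

lemma hfun_min_le_at_selection:
  assumes "(INF x\<in>X. ereal (f x (mu *\<^sub>R y))) = (INF x\<in>X. hfun f Y1 x mu)"
    and "x0 \<in> X" and "\<And>x. x \<in> X \<Longrightarrow> hfun f Y1 x0 mu \<le> hfun f Y1 x mu"
    and "x \<in> X"
  shows "hfun f Y1 x0 mu \<le> ereal (f x (mu *\<^sub>R y))"
proof -
  have "hfun f Y1 x0 mu = (INF x\<in>X. ereal (f x (mu *\<^sub>R y)))"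
    using assms(1-3) INF_eq_attained[of x0 X "\<lambda>x. hfun f Y1 x mu"] by simp
  also have "\<dots> \<le> ereal (f x (mu *\<^sub>R y))"
    using \<open>x \<in> X\<close> by (rule INF_lower)
  finally show ?thesis .
qed

theorem lemmaA1:
  fixes X :: "'x set" and Y1 :: "'a::real_vector set"
    and f :: "'x \<Rightarrow> 'a \<Rightarrow> real" and y1 :: "real \<Rightarrow> 'a"
    and xs :: 'x and mus :: real
  assumes "X \<noteq> {}" and "Y1 \<noteq> {}"
    and a_mem: "\<forall>mu\<ge>0. y1 mu \<in> Y1"
    and a_eq1: "\<forall>mu\<ge>0. (INF x\<in>X. ereal (gfun f x (y1 mu) mu))
                        = (SUP y\<in>Y1. INF x\<in>X. ereal (gfun f x y mu))"
    and a_eq2: "\<forall>mu\<ge>0. (SUP y\<in>Y1. INF x\<in>X. ereal (gfun f x y mu))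
                        = (INF x\<in>X. SUP y\<in>Y1. ereal (gfun f x y mu))"
    and b_mem: "xs \<in> X" "mus \<ge> 0"
    and b_saddle: "\<forall>x\<in>X. \<forall>mu\<ge>0. hfun f Y1 x mus \<ge> hfun f Y1 xs mus \<and> hfun f Y1 xs mus \<ge> hfun f Y1 xs mu"
  shows "\<forall>x\<in>X. \<forall>y\<in>cone_of Y1.
           f x (mus *\<^sub>R y1 mus) \<ge> f xs (mus *\<^sub>R y1 mus) \<and> f xs (mus *\<^sub>R y1 mus) \<ge> f xs y"
proof -
  let ?ys = "mus *\<^sub>R y1 mus"
  have INF_eq: "(INF x\<in>X. ereal (f x ?ys)) = (INF x\<in>X. hfun f Y1 x mus)"
    using a_eq1 a_eq2 b_mem by (intro INF_selection_eq_INF_hfun) auto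
  have h_le: "hfun f Y1 xs mus \<le> ereal (f x ?ys)" if "x \<in> X" for x
    using b_saddle b_mem by (intro hfun_min_le_at_selection[OF INF_eq b_mem(1) _ that]) auto
  have f_le_h: "ereal (f xs ?ys) \<le> hfun f Y1 xs mus"
    using a_mem b_mem by (intro hfun_upper) auto
  have f_le: "f xs ?ys \<le> f x ?ys" if "x \<in> X" for x
    using order_trans[OF f_le_h h_le[OF that]] by simp
  have "f xs y \<le> f xs ?ys" if "y \<in> cone_of Y1" for y
  proof -
    obtain mu where "mu \<ge> 0" and y_le: "ereal (f xs y) \<le> hfun f Y1 xs mu"
      using \<open>y \<in> cone_of Y1\<close> by (rule hfun_upper_cone)
    note y_le
    also have "hfun f Y1 xs mu \<le> hfun f Y1 xs mus" using b_saddle b_mem \<open>mu \<ge> 0\<close> by auto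
    also have "\<dots> \<le> ereal (f xs ?ys)" using h_le b_mem by auto
    finally show ?thesis by simp
  qed
  with f_le show ?thesis by blast
qed

end
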